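(* Let $u:\mathbb{H}^1\to\mathbb{R}$ be a smooth pluriharmonic function such that the $Q'$-curvature of $(\mathbb{H}^1,e^u\theta)$ satisfies $Q'\ge 0$, the metric is normal, i.e. $$u(x)=\frac{1}{c'_1}\int_{\mathbb{H}^1}\log\frac{\rho(y)}{\rho(y^{-1}x)}\,Q'(y)e^{4u(y)}\,dv(y)+C$$ for some constant $C$, and $$\int_{\mathbb{H}^1} Q' e^{4u}\,\theta\wedge d\theta<c'_1 .$$ Then $e^{4u}$ is an $A_1$ weight on $\mathbb{H}^1$.
   Context: $\mathbb{H}^1=\mathbb{C}\times\mathbb{R}$ with coordinates $(z,t)$, $z=x+iy$, group law $(z,t)\cdot(w,s)=(z+w,\,t+s+2\,\mathrm{Im}(z\bar w))$, left-invariant vector fields $X=\partial_x+2y\partial_t$, $Y=\partial_y-2x\partial_t$, standard contact form $\theta=dt+2(x\,dy-y\,dx)$, and $dv=\theta\wedge d\theta$. $\Delta_b=X^2+Y^2$. A real function is pluriharmonic if locally it is the real part of a CR function $f$ ($(X+iY)f=0$). On $\mathbb{H}^1$, $P'u=2\Delta_b^2u$ and the $Q'$-curvature of $e^u\theta$ ($u$ pluriharmonic) is defined by $P'u=Q'e^{4u}$. The homogeneous norm is $\rho(z,t)=(|z|^4+t^2)^{1/4}$; $c'_1>0$ is the constant such that $\frac{1}{c'_1}\log\frac{1}{\rho(q^{-1}p)}$ is the fundamental solution of $P'$ on pluriharmonic functions. Balls are $B(x,r)=\{y:\rho(x^{-1}y)<r\}$. A nonnegative locally integrable function $\omega$ is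 an $A_1$ weight if there is $C_0$ such that for every ball $B$, $\frac{1}{|B|}\int_B\omega\,dv\le C_0\inf_{B}\omega$ (equivalently, the Hardy–Littlewood maximal function satisfies $M\omega\le C_0\omega$ a.e.), where $|B|$ is the Haar measure of $B$. *)

theory Defs
  imports "HOL-Analysis.Analysis"
begin

text \<open>The Heisenberg group H^1 = C x R, modelled as real x real x real with coordinates (x,y,t),
  z = x + i y.\<close>

type_synonym heis = "real \<times> real \<times> real"

definition hmult :: "heis \<Rightarrow> heis \<Rightarrow> heis" where
  "hmult p q = (case p of (x1, y1, t1) \<Rightarrow> case q of (x2, y2, t2) \<Rightarrow>
      (x1 + x2, y1 + y2, t1 + t2 + 2 * (y1 * x2 - x1 * y2)))"
  \<comment> \<open>2 Im(z \<bar>w\<bar>) with z = x1 + i y1, w = x2 + i y2 equals 2 (y1 x2 - x1 y2)\<close>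

definition hinv :: "heis \<Rightarrow> heis" where
  "hinv p = (case p of (x, y, t) \<Rightarrow> (-x, -y, -t))"

definition hnorm :: "heis \<Rightarrow> real" where
  "hnorm p = (case p of (x, y, t) \<Rightarrow> ((x\<^sup>2 + y\<^sup>2)\<^sup>2 + t\<^sup>2) powr (1/4))"

definition hball :: "heis \<Rightarrow> real \<Rightarrow> heis set" where
  "hball p r = {q. hnorm (hmult (hinv p) q) < r}"

text \<open>Volume form dv = theta /\ d theta = 4 dx dy dt (Haar measure).\<close>
definition hvol :: "heis measure" where
  "hvol = density lborel (\<lambda>_. ennreal 4)"

definition ex :: heis where "ex = (1, 0, 0)"
definition ey :: heis where "ey = (0, 1, 0)"
definition et :: heis where "et = (0, 0, 1)"

definition pd :: "heis \<Rightarrow> (heis \<Rightarrow> 'b::real_normed_vector) \<Rightarrow> heis \<Rightarrow> 'b" where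
  "pd v f p = frechet_derivative f (at p) v"

fun iter_pd :: "heis list \<Rightarrow> (heis \<Rightarrow> 'b::real_normed_vector) \<Rightarrow> heis \<Rightarrow> 'b" where
  "iter_pd [] f = f"
| "iter_pd (v # vs) f = pd v (iter_pd vs f)"

definition smooth_heis :: "(heis \<Rightarrow> 'b::real_normed_vector) \<Rightarrow> bool" where
  "smooth_heis f \<longleftrightarrow> (\<forall>vs p. iter_pd vs f differentiable (at p))"

definition Xop :: "(heis \<Rightarrow> 'b::real_normed_vector) \<Rightarrow> heis \<Rightarrow> 'b" where
  "Xop f p = pd ex f p + (2 * fst (snd p)) *\<^sub>R pd et f p"

definition Yop :: "(heis \<Rightarrow> 'b::real_normed_vector) \<Rightarrow> heis \<Rightarrow> 'b" where
  "Yop f p = pd ey f p - (2 * fst p) *\<^sub>R pd et f p"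

definition sublap :: "(heis \<Rightarrow> real) \<Rightarrow> heis \<Rightarrow> real" where
  "sublap f p = Xop (Xop f) p + Yop (Yop f) p"

definition Pprime :: "(heis \<Rightarrow> real) \<Rightarrow> heis \<Rightarrow> real" where
  "Pprime u p = 2 * sublap (sublap u) p"

definition Qprime :: "(heis \<Rightarrow> real) \<Rightarrow> heis \<Rightarrow> real" where
  "Qprime u p = Pprime u p / exp (4 * u p)"

definition CR_on :: "heis set \<Rightarrow> (heis \<Rightarrow> complex) \<Rightarrow> bool" where
  "CR_on U f \<longleftrightarrow> (\<forall>q\<in>U. f differentiable (at q) \<and> Xop f q + \<i> * Yop f q = 0)"

definition pluriharmonic :: "(heis \<Rightarrow> real) \<Rightarrow> bool" where
  "pluriharmonic u \<longleftrightarrow> (\<forall>p. \<exists>U f. open U \<and> p \<in> U \<and> CR_on U f \<and> (\<forall>q\<in>U. Re (f q) = u q))"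

definition A1_weight :: "(heis \<Rightarrow> real) \<Rightarrow> bool" where
  "A1_weight w \<longleftrightarrow>
     (\<forall>p. 0 \<le> w p) \<and>
     (\<forall>K. compact K \<longrightarrow> set_integrable hvol K w) \<and>
     (\<exists>C0. \<forall>p r. 0 < r \<longrightarrow>
        (set_lebesgue_integral hvol (hball p r) w) / measure hvol (hball p r)
          \<le> C0 * (INF q\<in>hball p r. w q))"

end

theory Submission
  imports Defs
begin

text \<open>By the representation formula, 4 (u x - u x') is the average, against the probability density
  Q' e^{4u} / \<alpha> (\<alpha> the total Q'-curvature), of \<beta> ln (\<rho>(y^{-1} x') / \<rho>(y^{-1} x)), where
  \<beta> = 4 \<alpha> / c'_1 < 4. Jensen's inequality therefore bounds e^{4u(x)} / e^{4u(x')} by the average of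
  (\<rho>(y^{-1} x') / \<rho>(y^{-1} x))^\<beta>. For x, x' in a ball B(p, r) the ratio is at most 3 when y lies
  outside B(p, 2r), and at most 3r / \<rho>(y^{-1} x) otherwise. As \<beta> is below the homogeneous dimension 4,
  the \<beta>-th power of the latter has integral O(r^4) = O(|B|) over x \<in> B. Integrating over B thus
  bounds the mean of e^{4u} on B by a constant times e^{4u(x')} for every x' \<in> B, which is the
  A_1 condition. Smoothness is used only through the continuity of u, and pluriharmonicity not at
  all once the representation formula is assumed.\<close>

section \<open>The Koranyi gauge and its distance\<close>

lemma sqrt_sqrt_eq_powr_quarter: "0 \<le> (x::real) \<Longrightarrow> sqrt (sqrt x) = x powr (1/4)"
  by (simp add: powr_half_sqrt[symmetric] powr_powr)

lemma hnorm_eq: "hnorm (x, y, t) = sqrt (sqrt ((x\<^sup>2 + y\<^sup>2)\<^sup>2 + t\<^sup>2))"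
  by (simp add: hnorm_def sqrt_sqrt_eq_powr_quarter)

lemma hnorm_pow4: "hnorm (x, y, t) ^ 4 = (x\<^sup>2 + y\<^sup>2)\<^sup>2 + t\<^sup>2"
proof -
  have "hnorm (x, y, t) ^ 4 = ((hnorm (x, y, t))\<^sup>2)\<^sup>2"
    by (simp flip: power_mult)
  then show ?thesis by (simp add: hnorm_eq)
qed

lemma hnorm_nonneg: "0 \<le> hnorm p"
  by (cases p) (simp add: hnorm_eq)

lemma hnorm_eq_0_iff: "hnorm p = 0 \<longleftrightarrow> p = 0"
  by (cases p) (simp add: hnorm_eq add_nonneg_eq_0_iff zero_prod_def)

lemma hnorm_pos: "p \<noteq> 0 \<Longrightarrow> 0 < hnorm p"
  using hnorm_nonneg[of p] hnorm_eq_0_iff[of p] by linarith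

lemma hnorm_hinv: "hnorm (hinv p) = hnorm p"
  by (cases p) (simp add: hnorm_def hinv_def)

lemma hnorm_less_iff: "0 < R \<Longrightarrow> hnorm (x, y, t) < R \<longleftrightarrow> (x\<^sup>2 + y\<^sup>2)\<^sup>2 + t\<^sup>2 < R ^ 4"
  by (metis hnorm_pow4 hnorm_nonneg power_less_imp_less_base power_strict_mono less_imp_le zero_less_numeral)

lemma continuous_on_hnorm: "continuous_on UNIV hnorm"
proof -
  have eq: "hnorm = (\<lambda>p. sqrt (sqrt (((fst p)\<^sup>2 + (fst (snd p))\<^sup>2)\<^sup>2 + (snd (snd p))\<^sup>2)))"
    by (auto simp: hnorm_eq)
  show ?thesis
    unfolding eq by (intro continuous_intros)
qed

text \<open>With A = |z|^2 + i t, the square of the norm of a product is the modulus of A + B + 2 z conj w,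
  which the triangle inequality and |z| \<le> hnorm bound by (P + Q)^2.\<close>
lemma hnorm_hmult_le: "hnorm (hmult p q) \<le> hnorm p + hnorm q"
proof -
  obtain a b s c d t where pq: "p = (a, b, s)" "q = (c, d, t)" by (cases p, cases q) auto
  define P Q where "P = hnorm p" and "Q = hnorm q"
  have PQ_nonneg: "0 \<le> P" "0 \<le> Q" by (simp_all add: P_def Q_def hnorm_nonneg)
  let ?A = "Complex (a\<^sup>2 + b\<^sup>2) s" and ?B = "Complex (c\<^sup>2 + d\<^sup>2) t"
    and ?Z = "Complex (2 * (a * c + b * d)) (2 * (b * c - a * d))"
  have sum: "?A + ?B + ?Z = Complex ((a + c)\<^sup>2 + (b + d)\<^sup>2) (s + t + 2 * (b * c - a * d))"
    by (simp add: complex_eq_iff power2_eq_square algebra_simps)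
  have norm_A: "cmod ?A = P\<^sup>2" and norm_B: "cmod ?B = Q\<^sup>2"
    by (simp_all add: cmod_def P_def Q_def hnorm_eq pq)
  have "sqrt (a\<^sup>2 + b\<^sup>2) \<le> P" "sqrt (c\<^sup>2 + d\<^sup>2) \<le> Q"
    unfolding P_def Q_def pq hnorm_eq
    by (intro real_sqrt_le_mono real_le_rsqrt; simp)+
  moreover have "cmod ?Z = 2 * sqrt (a\<^sup>2 + b\<^sup>2) * sqrt (c\<^sup>2 + d\<^sup>2)"
  proof -
    have "(2 * (a * c + b * d))\<^sup>2 + (2 * (b * c - a * d))\<^sup>2 = 4 * ((a\<^sup>2 + b\<^sup>2) * (c\<^sup>2 + d\<^sup>2))"
      by (simp add: power2_eq_square algebra_simps)
    then show ?thesis by (simp add: cmod_def real_sqrt_mult)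
  qed
  ultimately have norm_Z: "cmod ?Z \<le> 2 * P * Q"
    by (simp add: mult_mono PQ_nonneg)
  have "cmod (?A + ?B + ?Z) \<le> cmod (?A + ?B) + cmod ?Z"
    by (rule norm_triangle_ineq)
  also have "\<dots> \<le> cmod ?A + cmod ?B + cmod ?Z"
    by (intro add_right_mono norm_triangle_ineq)
  also have "\<dots> \<le> (P + Q)\<^sup>2"
    using norm_A norm_B norm_Z by (simp add: power2_sum)
  finally have "(cmod (?A + ?B + ?Z))\<^sup>2 \<le> ((P + Q)\<^sup>2)\<^sup>2"
    by (rule power_mono) simp
  moreover have "hnorm (hmult p q) ^ 4 = (cmod (?A + ?B + ?Z))\<^sup>2"
    unfolding sum by (simp add: cmod_def hmult_def pq hnorm_pow4)
  ultimately have "hnorm (hmult p q) ^ Suc 3 \<le> (P + Q) ^ Suc 3"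
    by (simp flip: power_mult)
  then show ?thesis
    unfolding P_def Q_def by (rule power_le_imp_le_base) (simp add: hnorm_nonneg)
qed

lemma hmult_hinv_hmult: "hmult (hinv p) (hmult p q) = q"
  by (cases p, cases q) (simp add: hmult_def hinv_def algebra_simps)

lemma hinv_hmult_hinv: "hinv (hmult (hinv p) q) = hmult (hinv q) p"
  by (cases p, cases q) (simp add: hmult_def hinv_def algebra_simps)

lemma hmult_hinv_through: "hmult (hinv p) r = hmult (hmult (hinv p) q) (hmult (hinv q) r)"
  by (cases p, cases q, cases r) (simp add: hmult_def hinv_def algebra_simps)

definition hdist :: "heis \<Rightarrow> heis \<Rightarrow> real" where
  "hdist p q = hnorm (hmult (hinv p) q)"

lemma hball_eq: "hball p r = {q. hdist p q < r}"
  by (simp add: hball_def hdist_def)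

lemma hdist_commute: "hdist p q = hdist q p"
  by (metis hdist_def hinv_hmult_hinv hnorm_hinv)

lemma hdist_triangle: "hdist p r \<le> hdist p q + hdist q r"
  unfolding hdist_def by (metis hmult_hinv_through hnorm_hmult_le)

lemma hdist_nonneg: "0 \<le> hdist p q"
  by (simp add: hdist_def hnorm_nonneg)

lemma hdist_eq_0_iff: "hdist p q = 0 \<longleftrightarrow> p = q"
  by (cases p, cases q) (auto simp: hdist_def hnorm_eq_0_iff hmult_def hinv_def zero_prod_def)

lemma hdist_pos: "p \<noteq> q \<Longrightarrow> 0 < hdist p q"
  using hdist_nonneg[of p q] hdist_eq_0_iff[of p q] by linarith

lemma continuous_on_hdist: "continuous_on UNIV (\<lambda>z. hdist (fst z) (snd z))"
proof -
  have eq: "(\<lambda>z. hdist (fst z) (snd z)) = (\<lambda>z. hnorm (fst (snd z) - fst (fst z),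
      fst (snd (snd z)) - fst (snd (fst z)),
      snd (snd (snd z)) - snd (snd (fst z))
        + 2 * (fst (fst z) * fst (snd (snd z)) - fst (snd (fst z)) * fst (snd z))))"
    by (auto simp: fun_eq_iff hdist_def hmult_def hinv_def algebra_simps split: prod.splits)
  show ?thesis
    unfolding eq by (intro continuous_on_compose2[OF continuous_on_hnorm] continuous_intros, auto)
qed

section \<open>Haar measure\<close>

lemma nn_integral_lborel_pair:
  fixes h :: "'a::euclidean_space \<times> 'b::euclidean_space \<Rightarrow> ennreal"
  assumes "h \<in> borel_measurable borel"
  shows "(\<integral>\<^sup>+x. h x \<partial>lborel) = (\<integral>\<^sup>+a. \<integral>\<^sup>+b. h (a, b) \<partial>lborel \<partial>lborel)"
proof -
  have "h \<in> borel_measurable (lborel \<Otimes>\<^sub>M lborel)"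
    using assms by (simp add: lborel_prod)
  then have "(\<integral>\<^sup>+x. h x \<partial>(lborel \<Otimes>\<^sub>M lborel)) = (\<integral>\<^sup>+a. \<integral>\<^sup>+b. h (a, b) \<partial>lborel \<partial>lborel)"
    by (rule lborel.nn_integral_fst[symmetric])
  then show ?thesis
    by (simp add: lborel_prod)
qed

lemma nn_integral_lborel_triple:
  fixes h :: "heis \<Rightarrow> ennreal"
  assumes [measurable]: "h \<in> borel_measurable borel"
  shows "(\<integral>\<^sup>+x. h x \<partial>lborel) = (\<integral>\<^sup>+a. \<integral>\<^sup>+b. \<integral>\<^sup>+c. h (a, b, c) \<partial>lborel \<partial>lborel \<partial>lborel)"
proof -
  have "(\<integral>\<^sup>+x. h x \<partial>lborel) = (\<integral>\<^sup>+a. \<integral>\<^sup>+y. h (a, y) \<partial>lborel \<partial>lborel)"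
    by (rule nn_integral_lborel_pair) measurable
  also have "\<dots> = (\<integral>\<^sup>+a. \<integral>\<^sup>+b. \<integral>\<^sup>+c. h (a, b, c) \<partial>lborel \<partial>lborel \<partial>lborel)"
    by (intro nn_integral_cong nn_integral_lborel_pair) measurable
  finally show ?thesis .
qed

lemma nn_integral_lborel_shift:
  fixes f :: "real \<Rightarrow> ennreal"
  assumes "f \<in> borel_measurable borel"
  shows "(\<integral>\<^sup>+x. f (a + x) \<partial>lborel) = (\<integral>\<^sup>+x. f x \<partial>lborel)"
  using nn_integral_real_affine[OF assms, of 1 a] by simp

lemma continuous_on_hmult: "continuous_on UNIV (\<lambda>x. hmult p x)"
  unfolding hmult_def by (cases p) (simp add: case_prod_beta', intro continuous_intros)

lemma measurable_hmult [measurable]: "(\<lambda>x. hmult p x) \<in> borel_measurable borel"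
  by (rule borel_measurable_continuous_onI[OF continuous_on_hmult])

lemma measurable_hnorm [measurable]: "hnorm \<in> borel_measurable borel"
  by (rule borel_measurable_continuous_onI[OF continuous_on_hnorm])

lemma measurable_hdist [measurable]:
  assumes [measurable]: "f \<in> borel_measurable M" "g \<in> borel_measurable M"
  shows "(\<lambda>x. hdist (f x) (g x)) \<in> borel_measurable M"
proof -
  have "(\<lambda>z. hdist (fst z) (snd z)) \<in> borel_measurable (borel \<Otimes>\<^sub>M borel)"
    unfolding borel_prod using borel_measurable_continuous_onI[OF continuous_on_hdist] by simp
  from measurable_compose[OF _ this, of "\<lambda>x. (f x, g x)"] show ?thesis
    by simp
qed

lemma measurable_hball [measurable]: "hball p r \<in> sets borel"
  unfolding hball_eq by measurable

text \<open>Left translation is a shear followed by a Euclidean translation, so Lebesgue measure is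
  invariant under it; this is checked one coordinate at a time, starting with t.\<close>
lemma nn_integral_lborel_hmult:
  fixes h :: "heis \<Rightarrow> ennreal"
  assumes [measurable]: "h \<in> borel_measurable borel"
  shows "(\<integral>\<^sup>+x. h (hmult p x) \<partial>lborel) = (\<integral>\<^sup>+x. h x \<partial>lborel)"
proof -
  obtain a b c where p: "p = (a, b, c)" by (cases p) auto
  have "(\<integral>\<^sup>+x. h (hmult p x) \<partial>lborel) =
      (\<integral>\<^sup>+x. \<integral>\<^sup>+y. \<integral>\<^sup>+t. h (a + x, b + y, (c + 2 * (b * x - a * y)) + t) \<partial>lborel \<partial>lborel \<partial>lborel)"
    by (subst nn_integral_lborel_triple) (measurable, simp add: p hmult_def algebra_simps)
  also have "\<dots> = (\<integral>\<^sup>+x. \<integral>\<^sup>+y. \<integral>\<^sup>+t. h (a + x, b + y, t) \<partial>lborel \<partial>lborel \<partial>lborel)"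
    by (intro nn_integral_cong nn_integral_lborel_shift) measurable
  also have "\<dots> = (\<integral>\<^sup>+x. \<integral>\<^sup>+y. \<integral>\<^sup>+t. h (a + x, y, t) \<partial>lborel \<partial>lborel \<partial>lborel)"
    by (intro nn_integral_cong
        nn_integral_lborel_shift[where f = "\<lambda>y. \<integral>\<^sup>+t. h (_, y, t) \<partial>lborel"]) measurable
  also have "\<dots> = (\<integral>\<^sup>+x. \<integral>\<^sup>+y. \<integral>\<^sup>+t. h (x, y, t) \<partial>lborel \<partial>lborel \<partial>lborel)"
    by (intro nn_integral_lborel_shift[where f = "\<lambda>x. \<integral>\<^sup>+y. \<integral>\<^sup>+t. h (x, y, t) \<partial>lborel \<partial>lborel"])
      measurable
  also have "\<dots> = (\<integral>\<^sup>+x. h x \<partial>lborel)"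
    by (subst nn_integral_lborel_triple) simp_all
  finally show ?thesis .
qed

lemma sets_hvol [simp, measurable_cong]: "sets hvol = sets borel"
  by (simp add: hvol_def)

lemma space_hvol [simp]: "space hvol = UNIV"
  by (simp add: hvol_def)

lemma measurable_hvol [simp]: "measurable hvol M = measurable borel M"
  by (rule measurable_cong_sets) simp_all

lemma nn_integral_hvol:
  "f \<in> borel_measurable borel \<Longrightarrow> (\<integral>\<^sup>+x. f x \<partial>hvol) = 4 * (\<integral>\<^sup>+x. f x \<partial>lborel)"
  unfolding hvol_def by (subst nn_integral_density) (simp_all add: nn_integral_cmult)

interpretation hvol: sigma_finite_measure hvol
  unfolding hvol_def
  by (subst sigma_finite_measure.sigma_finite_iff_density_finite[OF sigma_finite_lborel]) simp_all

interpretation hvol_pair: pair_sigma_finite hvol hvol ..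

lemma nn_integral_hvol_hmult:
  fixes h :: "heis \<Rightarrow> ennreal"
  assumes "h \<in> borel_measurable borel"
  shows "(\<integral>\<^sup>+x. h (hmult p x) \<partial>hvol) = (\<integral>\<^sup>+x. h x \<partial>hvol)"
  using assms by (simp add: nn_integral_hvol nn_integral_lborel_hmult)

lemma nn_integral_hvol_hdist:
  fixes h :: "real \<Rightarrow> ennreal"
  assumes [measurable]: "h \<in> borel_measurable borel"
  shows "(\<integral>\<^sup>+x. h (hdist p x) \<partial>hvol) = (\<integral>\<^sup>+x. h (hnorm x) \<partial>hvol)"
proof -
  have "(\<integral>\<^sup>+x. h (hnorm x) \<partial>hvol) = (\<integral>\<^sup>+x. h (hnorm (hmult (hinv p) (hmult p x))) \<partial>hvol)"
    by (simp add: hmult_hinv_hmult)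
  also have "\<dots> = (\<integral>\<^sup>+x. h (hdist p x) \<partial>hvol)"
    unfolding hdist_def by (rule nn_integral_hvol_hmult) measurable
  finally show ?thesis ..
qed

lemma emeasure_hball: "emeasure hvol (hball p r) = 4 * emeasure lborel {x. hnorm x < r}"
proof -
  have "emeasure hvol (hball p r) = (\<integral>\<^sup>+x. indicator {..<r} (hdist p x) \<partial>hvol)"
    by (simp add: hball_eq nn_integral_indicator[symmetric] indicator_def del: nn_integral_indicator)
  also have "\<dots> = (\<integral>\<^sup>+x. indicator {..<r} (hnorm x) \<partial>hvol)"
    by (rule nn_integral_hvol_hdist) simp
  also have "\<dots> = 4 * emeasure lborel {x. hnorm x < r}"
    by (simp add: nn_integral_hvol nn_integral_indicator[symmetric] indicator_def
        del: nn_integral_indicator)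
  finally show ?thesis .
qed

lemma emeasure_lborel_box3:
  assumes "a1 \<le> b1" "a2 \<le> b2" "a3 \<le> b3"
  shows "emeasure (lborel :: heis measure) ({a1..b1} \<times> {a2..b2} \<times> {a3..b3})
    = ennreal ((b1 - a1) * (b2 - a2) * (b3 - a3))"
proof -
  have "emeasure (lborel :: heis measure) ({a1..b1} \<times> {a2..b2} \<times> {a3..b3})
      = emeasure (lborel \<Otimes>\<^sub>M lborel) ({a1..b1} \<times> ({a2..b2} \<times> {a3..b3}))"
    by (simp only: lborel_prod)
  also have "\<dots> = emeasure lborel {a1..b1} * emeasure lborel ({a2..b2} \<times> {a3..b3})"
    by (rule lborel.emeasure_pair_measure_Times) (auto intro!: borel_closed closed_Times)
  also have "emeasure (lborel :: (real \<times> real) measure) ({a2..b2} \<times> {a3..b3})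
      = emeasure (lborel \<Otimes>\<^sub>M lborel) ({a2..b2} \<times> {a3..b3})"
    by (simp only: lborel_prod)
  also have "\<dots> = emeasure lborel {a2..b2} * emeasure lborel {a3..b3}"
    by (rule lborel.emeasure_pair_measure_Times) (auto intro!: borel_closed closed_Times)
  finally show ?thesis
    using assms by (simp add: ennreal_mult mult.assoc)
qed

lemma emeasure_hnorm_less_le:
  assumes R: "0 < R"
  shows "emeasure lborel {x. hnorm x < R} \<le> ennreal (8 * R ^ 4)"
proof -
  have "{x. hnorm x < R} \<subseteq> {-R..R} \<times> {-R..R} \<times> {-(R\<^sup>2)..R\<^sup>2}"
  proof
    fix x assume "x \<in> {x. hnorm x < R}"
    then obtain a b c where x: "x = (a, b, c)" and "hnorm (a, b, c) < R"
      by (cases x) auto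
    then have lt: "(a\<^sup>2 + b\<^sup>2)\<^sup>2 + c\<^sup>2 < (R\<^sup>2)\<^sup>2"
      using R by (simp add: hnorm_less_iff flip: power_mult)
    then have ab: "(a\<^sup>2 + b\<^sup>2)\<^sup>2 < (R\<^sup>2)\<^sup>2" and c: "c\<^sup>2 \<le> (R\<^sup>2)\<^sup>2"
      by (smt (verit) zero_le_power2)+
    from ab have "a\<^sup>2 + b\<^sup>2 < R\<^sup>2"
      by (rule power2_less_imp_less) simp
    with c have "a\<^sup>2 \<le> R\<^sup>2" "b\<^sup>2 \<le> R\<^sup>2" "c\<^sup>2 \<le> (R\<^sup>2)\<^sup>2"
      by (smt (verit) zero_le_power2)+
    then have "\<bar>a\<bar> \<le> R" "\<bar>b\<bar> \<le> R" "\<bar>c\<bar> \<le> R\<^sup>2"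
      using R abs_le_square_iff[of a R] abs_le_square_iff[of b R] abs_le_square_iff[of c "R\<^sup>2"]
      by simp_all
    then show "x \<in> {-R..R} \<times> {-R..R} \<times> {-(R\<^sup>2)..R\<^sup>2}"
      by (auto simp: x)
  qed
  then have "emeasure lborel {x. hnorm x < R} \<le> emeasure lborel ({-R..R} \<times> {-R..R} \<times> {-(R\<^sup>2)..R\<^sup>2})"
    by (intro emeasure_mono) (simp_all add: borel_closed closed_Times)
  also have "\<dots> = ennreal (8 * R ^ 4)"
    using R by (subst emeasure_lborel_box3) (simp_all add: power2_eq_square power4_eq_xxxx)
  finally show ?thesis .
qed

lemma emeasure_hnorm_less_ge:
  assumes R: "0 < R"
  shows "ennreal (R ^ 4) \<le> emeasure lborel {x. hnorm x < R}"
proof -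
  let ?box = "{-(R/2)..R/2} \<times> {-(R/2)..R/2} \<times> {-(R\<^sup>2/2)..R\<^sup>2/2}"
  have "?box \<subseteq> {x. hnorm x < R}"
  proof
    fix x assume "x \<in> ?box"
    then obtain a b c where x: "x = (a, b, c)"
      and "\<bar>a\<bar> \<le> R/2" "\<bar>b\<bar> \<le> R/2" "\<bar>c\<bar> \<le> R\<^sup>2/2"
      by (cases x) auto
    then have sq: "a\<^sup>2 \<le> (R/2)\<^sup>2" "b\<^sup>2 \<le> (R/2)\<^sup>2" "c\<^sup>2 \<le> (R\<^sup>2/2)\<^sup>2"
      by (metis abs_ge_zero power2_abs power_mono)+
    then have "a\<^sup>2 + b\<^sup>2 \<le> R\<^sup>2/2"
      by (simp add: power_divide)
    then have "(a\<^sup>2 + b\<^sup>2)\<^sup>2 \<le> (R\<^sup>2/2)\<^sup>2"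
      by (rule power_mono) simp
    from this sq(3) have "(a\<^sup>2 + b\<^sup>2)\<^sup>2 + c\<^sup>2 \<le> (R\<^sup>2/2)\<^sup>2 + (R\<^sup>2/2)\<^sup>2"
      by (rule add_mono)
    also have "\<dots> < R ^ 4"
      using R by (simp add: power_divide flip: power_mult)
    finally show "x \<in> {x. hnorm x < R}"
      using R by (simp add: x hnorm_less_iff)
  qed
  then have "emeasure lborel ?box \<le> emeasure lborel {x. hnorm x < R}"
    by (intro emeasure_mono) measurable
  moreover have "emeasure lborel ?box = ennreal (R ^ 4)"
    using R by (subst emeasure_lborel_box3) (simp_all add: power2_eq_square power4_eq_xxxx)
  ultimately show ?thesis
    by simp
qed

lemma emeasure_hball_le:
  assumes "0 < r"
  shows "emeasure hvol (hball p r) \<le> ennreal (32 * r ^ 4)"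
proof -
  have "emeasure hvol (hball p r) \<le> 4 * ennreal (8 * r ^ 4)"
    unfolding emeasure_hball using assms by (intro mult_left_mono emeasure_hnorm_less_le) simp_all
  then show ?thesis
    by (simp add: ennreal_mult flip: mult.assoc)
qed

lemma emeasure_hball_ge: "0 < r \<Longrightarrow> ennreal (4 * r ^ 4) \<le> emeasure hvol (hball p r)"
  using emeasure_hnorm_less_ge[of r] by (simp add: emeasure_hball ennreal_mult mult_left_mono)

section \<open>A singular integral below the homogeneous dimension\<close>

lemma ennreal_le_suminf: "(f :: nat \<Rightarrow> ennreal) k \<le> suminf f"
  using sum_le_suminf[of f "{k}"] by (simp add: summableI)

text \<open>Dyadic decomposition: where R/2^(n+1) < hnorm x \<le> R/2^n the integrand is at most
  2^(\<beta>(n+1)), and x lies in the ball of radius 2R/2^n.\<close>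
lemma indicator_powr_le_dyadic_suminf:
  assumes R: "0 < R" and \<beta>: "0 \<le> \<beta>"
  shows "indicator {x. hnorm x < R} x * ennreal ((R / hnorm x) powr \<beta>)
    \<le> (\<Sum>n. ennreal ((2 powr \<beta>) ^ (n + 1)) * indicator {x. hnorm x < 2 * R / 2 ^ n} x)"
proof (cases "0 < hnorm x \<and> hnorm x < R")
  case False
  then have "hnorm x = 0 \<or> \<not> hnorm x < R"
    using hnorm_nonneg[of x] by linarith
  then show ?thesis
    by (elim disjE) simp_all
next
  case True
  define y where "y = R / hnorm x"
  have y: "1 < y"
    using True by (simp add: y_def)
  define k where "k = \<lfloor>log 2 y\<rfloor>"
  have k: "2 powr real_of_int k \<le> y \<and> y < 2 powr real_of_int (k + 1)"
    using floor_log_eq_powr_iff[of y 2 k] y by (simp add: k_def)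
  have "0 \<le> k"
    using y unfolding k_def by simp
  then obtain n where "k = int n"
    using nonneg_int_cases by blast
  then have n: "2 ^ n \<le> y" "y < 2 ^ (n + 1)"
    using k by (simp_all add: powr_add powr_realpow)
  have "hnorm x \<le> R / 2 ^ n"
    using n True by (simp add: y_def field_simps)
  also have "\<dots> < 2 * R / 2 ^ n"
    using R by (simp add: divide_strict_right_mono)
  finally have in_ball: "indicator {x. hnorm x < 2 * R / 2 ^ n} x = (1 :: ennreal)"
    by simp
  have "y powr \<beta> \<le> (2 ^ (n + 1)) powr \<beta>"
    using n y \<beta> by (intro powr_mono2) auto
  also have "\<dots> = (2 powr real (n + 1)) powr \<beta>"
    by (simp only: powr_realpow zero_less_numeral)
  also have "\<dots> = (2 powr \<beta>) ^ (n + 1)"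
    by (simp only: powr_powr powr_power mult.commute)
  finally have "(R / hnorm x) powr \<beta> \<le> (2 powr \<beta>) ^ (n + 1)"
    by (simp add: y_def)
  then have "indicator {x. hnorm x < R} x * ennreal ((R / hnorm x) powr \<beta>)
      \<le> ennreal ((2 powr \<beta>) ^ (n + 1)) * indicator {x. hnorm x < 2 * R / 2 ^ n} x"
    using True in_ball by (simp add: ennreal_leI)
  also have "\<dots> \<le> (\<Sum>n. ennreal ((2 powr \<beta>) ^ (n + 1)) * indicator {x. hnorm x < 2 * R / 2 ^ n} x)"
    by (rule ennreal_le_suminf)
  finally show ?thesis .
qed

definition singular_const :: "real \<Rightarrow> real" where
  "singular_const \<beta> = 128 * 2 powr \<beta> / (1 - 2 powr \<beta> / 16)"

lemma two_powr_less_16: "\<beta> < 4 \<Longrightarrow> 2 powr \<beta> < (16 :: real)"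
  using powr_less_mono[of \<beta> 4 2] by (simp add: powr_numeral)

lemma singular_const_pos: "\<beta> < 4 \<Longrightarrow> 0 < singular_const \<beta>"
  using two_powr_less_16[of \<beta>] by (simp add: singular_const_def)

text \<open>The singularity (R / hnorm x)^\<beta> is integrable exactly because \<beta> is below the homogeneous
  dimension 4: the dyadic series is geometric with ratio 2^\<beta> / 16.\<close>
lemma nn_integral_hnorm_powr_le:
  assumes R: "0 < R" and \<beta>: "0 \<le> \<beta>" "\<beta> < 4"
  shows "(\<integral>\<^sup>+x. indicator {x. hnorm x < R} x * ennreal ((R / hnorm x) powr \<beta>) \<partial>lborel)
    \<le> ennreal (singular_const \<beta> * R ^ 4)"
proof -
  define q where "q = 2 powr \<beta> / 16"
  have q: "0 < q" "q < 1"
    using two_powr_less_16[OF \<beta>(2)] by (simp_all add: q_def)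
  have term_eq: "(2 powr \<beta>) ^ (n + 1) * (8 * (2 * R / 2 ^ n) ^ 4) = 128 * 2 powr \<beta> * R ^ 4 * q ^ n"
    for n :: nat
  proof -
    have "(2::real) ^ (n * 4) = 16 ^ n"
      by (simp add: power_mult mult.commute[of n])
    then show ?thesis
      by (simp add: q_def power_divide power_mult_distrib field_simps flip: power_mult)
  qed
  have "(\<integral>\<^sup>+x. indicator {x. hnorm x < R} x * ennreal ((R / hnorm x) powr \<beta>) \<partial>lborel)
      \<le> (\<integral>\<^sup>+x. (\<Sum>n. ennreal ((2 powr \<beta>) ^ (n + 1)) * indicator {x. hnorm x < 2 * R / 2 ^ n} x) \<partial>lborel)"
    by (intro nn_integral_mono indicator_powr_le_dyadic_suminf R \<beta>)
  also have "\<dots> = (\<Sum>n. ennreal ((2 powr \<beta>) ^ (n + 1)) * emeasure lborel {x. hnorm x < 2 * R / 2 ^ n})"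
    by (subst nn_integral_suminf) (measurable, simp add: nn_integral_cmult_indicator)
  also have "\<dots> \<le> (\<Sum>n. ennreal ((2 powr \<beta>) ^ (n + 1) * (8 * (2 * R / 2 ^ n) ^ 4)))"
  proof (intro suminf_le)
    fix n :: nat
    have "emeasure lborel {x. hnorm x < 2 * R / 2 ^ n} \<le> ennreal (8 * (2 * R / 2 ^ n) ^ 4)"
      using R by (intro emeasure_hnorm_less_le) simp
    then show "ennreal ((2 powr \<beta>) ^ (n + 1)) * emeasure lborel {x. hnorm x < 2 * R / 2 ^ n}
        \<le> ennreal ((2 powr \<beta>) ^ (n + 1) * (8 * (2 * R / 2 ^ n) ^ 4))"
      by (simp add: ennreal_mult mult_left_mono)
  qed (simp_all add: summableI)
  also have "\<dots> = (\<Sum>n. ennreal (128 * 2 powr \<beta> * R ^ 4 * q ^ n))"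
    by (simp only: term_eq)
  also have "\<dots> = ennreal (\<Sum>n. 128 * 2 powr \<beta> * R ^ 4 * q ^ n)"
    using q R by (intro suminf_ennreal2) (auto intro!: summable_mult summable_geometric)
  also have "(\<Sum>n. 128 * 2 powr \<beta> * R ^ 4 * q ^ n) = 128 * 2 powr \<beta> * R ^ 4 * (1 / (1 - q))"
    using q by (subst suminf_mult) (auto simp: suminf_geometric)
  also have "\<dots> = singular_const \<beta> * R ^ 4"
    by (simp add: singular_const_def q_def)
  finally show ?thesis .
qed

lemma nn_integral_hdist_powr_le:
  assumes "0 < R" "0 \<le> \<beta>" "\<beta> < 4"
  shows "(\<integral>\<^sup>+x. indicator (hball p R) x * ennreal ((R / hdist p x) powr \<beta>) \<partial>hvol)
    \<le> ennreal (4 * singular_const \<beta> * R ^ 4)"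
proof -
  have "(\<integral>\<^sup>+x. indicator (hball p R) x * ennreal ((R / hdist p x) powr \<beta>) \<partial>hvol)
      = (\<integral>\<^sup>+x. indicator {..<R} (hdist p x) * ennreal ((R / hdist p x) powr \<beta>) \<partial>hvol)"
    by (intro nn_integral_cong) (simp add: hball_eq indicator_def)
  also have "\<dots> = (\<integral>\<^sup>+x. indicator {..<R} (hnorm x) * ennreal ((R / hnorm x) powr \<beta>) \<partial>hvol)"
    by (rule nn_integral_hvol_hdist[where h = "\<lambda>s. indicator {..<R} s * ennreal ((R / s) powr \<beta>)"])
      measurable
  also have "\<dots> = 4 * (\<integral>\<^sup>+x. indicator {x. hnorm x < R} x * ennreal ((R / hnorm x) powr \<beta>) \<partial>lborel)"
    by (subst nn_integral_hvol) (measurable, simp add: indicator_def)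
  also have "\<dots> \<le> 4 * ennreal (singular_const \<beta> * R ^ 4)"
    using assms by (intro mult_left_mono nn_integral_hnorm_powr_le) simp_all
  finally show ?thesis
    by (simp add: ennreal_mult' mult.assoc)
qed

section \<open>Normal conformal factors\<close>

text \<open>Jensen's inequality for exp, via the tangent line exp t \<ge> exp m (1 + t - m) at the mean m.\<close>
lemma exp_integral_le_nn_integral_exp:
  fixes w g :: "'a \<Rightarrow> real"
  assumes [measurable]: "w \<in> borel_measurable M" "g \<in> borel_measurable M"
    and w_nonneg: "\<And>y. 0 \<le> w y" and w_int: "integrable M w" and w_total: "integral\<^sup>L M w = 1"
    and wg_int: "integrable M (\<lambda>y. w y * g y)"
  shows "ennreal (exp (\<integral>y. w y * g y \<partial>M)) \<le> (\<integral>\<^sup>+y. ennreal (w y * exp (g y)) \<partial>M)"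
proof (cases "(\<integral>\<^sup>+y. ennreal (w y * exp (g y)) \<partial>M) = \<infinity>")
  case False
  define m where "m = (\<integral>y. w y * g y \<partial>M)"
  have w_exp_int: "integrable M (\<lambda>y. w y * exp (g y))"
    using False w_nonneg by (intro integrableI_nonneg) (auto simp: less_top)
  have tangent: "w y * (exp m * (1 + g y - m)) \<le> w y * exp (g y)" for y
  proof -
    have "exp m * (1 + (g y - m)) \<le> exp m * exp (g y - m)"
      by (intro mult_left_mono exp_ge_add_one_self) simp
    then show ?thesis
      using w_nonneg[of y] by (intro mult_left_mono) (simp_all add: add_diff_eq exp_diff)
  qed
  have "exp m = (\<integral>y. exp m * (w y + w y * g y - m * w y) \<partial>M)"
    using w_int wg_int by (simp add: w_total m_def)
  also have "\<dots> \<le> (\<integral>y. w y * exp (g y) \<partial>M)"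
    using w_int wg_int w_exp_int tangent
    by (intro integral_mono) (auto simp: algebra_simps)
  finally have "ennreal (exp m) \<le> ennreal (\<integral>y. w y * exp (g y) \<partial>M)"
    by (rule ennreal_leI)
  also have "\<dots> = (\<integral>\<^sup>+y. ennreal (w y * exp (g y)) \<partial>M)"
    using w_exp_int w_nonneg by (intro nn_integral_eq_integral[symmetric]) auto
  finally show ?thesis
    by (simp add: m_def)
qed simp

lemma AE_hvol_not_in: "finite A \<Longrightarrow> AE y in hvol. y \<notin> A"
  unfolding hvol_def
  by (subst AE_density) (auto intro: AE_not_in finite_imp_null_set_lborel)

lemma hdist_vertical_eq_hnorm:
  assumes "hdist y (0, 0, s) = hnorm y" "s \<noteq> 0"
  shows "2 * snd (snd y) = s"
proof -
  obtain a b t where y: "y = (a, b, t)"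
    by (cases y) auto
  have "hdist y (0, 0, s) ^ 4 = (a\<^sup>2 + b\<^sup>2)\<^sup>2 + (s - t)\<^sup>2"
    by (simp add: y hdist_def hmult_def hinv_def hnorm_pow4)
  moreover have "hnorm y ^ 4 = (a\<^sup>2 + b\<^sup>2)\<^sup>2 + t\<^sup>2"
    by (simp add: y hnorm_pow4)
  ultimately have "(s - t)\<^sup>2 = t\<^sup>2"
    using assms(1) by (metis add_left_cancel)
  then have "s * (s - 2 * t) = 0"
    by algebra
  then show ?thesis
    using assms(2) by (auto simp: y)
qed

text \<open>Only the products of f with the kernels ln (hnorm y / hdist y x) are known to be integrable;
  the kernels for x = (0,0,1) and x = (0,0,-1) never vanish simultaneously away from the origin,
  so f is recovered from the two products by division.\<close>
lemma borel_measurable_of_log_kernel: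
  fixes f :: "heis \<Rightarrow> real"
  assumes "\<And>s. (\<lambda>y. ln (hnorm y / hdist y (0, 0, s)) * f y) \<in> borel_measurable borel"
  shows "f \<in> borel_measurable borel"
proof -
  define K where "K s y = ln (hnorm y / hdist y (0, 0, s))" for s y
  have [measurable]: "K s \<in> borel_measurable borel" "(\<lambda>y. K s y * f y) \<in> borel_measurable borel" for s
    using assms unfolding K_def by measurable
  have K_eq_0: "2 * snd (snd y) = s \<or> y = (0, 0, s)" if "y \<noteq> 0" "K s y = 0" "s \<noteq> 0" for y s
  proof (cases "hdist y (0, 0, s) = 0")
    case False
    then have "hdist y (0, 0, s) = hnorm y"
      using that hnorm_pos[of y] hdist_nonneg[of y "(0, 0, s)"] by (simp add: K_def)
    then show ?thesis
      using that(3) by (simp add: hdist_vertical_eq_hnorm)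
  qed (simp add: hdist_eq_0_iff)
  have "K 1 y \<noteq> 0 \<or> K (-1) y \<noteq> 0" if "y \<noteq> 0" for y
    using K_eq_0[OF that, of 1] K_eq_0[OF that, of "-1"] by auto
  then have "f = (\<lambda>y. if y = 0 then f 0 else if K 1 y \<noteq> 0 then K 1 y * f y / K 1 y
      else K (-1) y * f y / K (-1) y)"
    by (auto simp: fun_eq_iff)
  also have "\<dots> \<in> borel_measurable borel"
    by measurable
  finally show ?thesis .
qed

lemma ln_kernel_diff:
  assumes "y \<noteq> 0" "y \<noteq> x" "y \<noteq> x'"
  shows "ln (hnorm y / hdist y x) - ln (hnorm y / hdist y x') = ln (hdist y x' / hdist y x)"
  using assms hnorm_pos[of y] hdist_pos[of y x] hdist_pos[of y x'] by (simp add: ln_div)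

text \<open>Far from the ball, y sees x and x' at comparable distances (ratio at most 3, and 3^4 = 81);
  near the ball, hdist y x' < 3r.\<close>
lemma hdist_ratio_powr_le:
  assumes r: "0 < r" and x: "x \<in> hball p r" and x': "x' \<in> hball p r" and \<beta>: "0 \<le> \<beta>" "\<beta> \<le> 4"
  shows "(hdist y x' / hdist y x) powr \<beta> \<le> 81 + indicator (hball p (2 * r)) y * (3 * r / hdist y x) powr \<beta>"
proof -
  have y_x': "hdist y x' \<le> hdist p y + hdist p x'"
    using hdist_triangle[of y x' p] hdist_commute[of y p] by linarith
  have p_y: "hdist p y \<le> hdist y x + hdist p x"
    using hdist_triangle[of p y x] hdist_commute[of x y] by linarith
  show ?thesis
  proof (cases "y \<in> hball p (2 * r)")
    case True
    have "hdist y x' / hdist y x \<le> 3 * r / hdist y x"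
      using y_x' True x' by (intro divide_right_mono) (auto simp: hball_eq hdist_nonneg)
    then have "(hdist y x' / hdist y x) powr \<beta> \<le> (3 * r / hdist y x) powr \<beta>"
      by (intro powr_mono2 \<beta>) (simp_all add: hdist_nonneg)
    then show ?thesis
      using True by simp
  next
    case False
    then have "hdist y x' \<le> 3 * hdist y x"
      using y_x' p_y x x' by (simp add: hball_eq)
    then have "hdist y x' / hdist y x \<le> 3"
      by (cases "hdist y x = 0") (simp_all add: divide_le_eq hdist_pos less_le hdist_nonneg)
    then have "(hdist y x' / hdist y x) powr \<beta> \<le> 3 powr \<beta>"
      by (intro powr_mono2 \<beta>) (simp_all add: hdist_nonneg)
    also have "\<dots> \<le> 3 powr (4 :: real)"
      using \<beta> by (intro powr_mono) auto
    finally show ?thesis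
      using False by (simp add: powr_numeral)
  qed
qed

lemma set_integrable_hvol_compact:
  assumes "continuous_on UNIV g" "compact K"
  shows "set_integrable hvol K (g :: heis \<Rightarrow> real)"
proof -
  have "continuous_on K g"
    using assms(1) by (rule continuous_on_subset) simp
  with assms(2) have "integrable lborel (\<lambda>x. indicator K x *\<^sub>R g x)"
    by (rule borel_integrable_compact)
  then have "integrable lborel (\<lambda>x. 4 *\<^sub>R (indicator K x *\<^sub>R g x))"
    by (rule integrable_scaleR_right)
  moreover have [measurable]: "K \<in> sets borel"
    using assms(2) by (simp add: compact_imp_closed borel_closed)
  ultimately have "integrable (density lborel (\<lambda>x. ennreal ((\<lambda>_. 4) x))) (\<lambda>x. indicator K x *\<^sub>R g x)"
    by (subst integrable_density) simp_all
  then show ?thesis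
    unfolding set_integrable_def hvol_def by simp
qed

lemma set_average_le_INF:
  fixes w :: "'a \<Rightarrow> real"
  assumes [measurable]: "B \<in> sets M" "w \<in> borel_measurable M"
    and w_nonneg: "\<And>x. 0 \<le> w x"
    and B_pos: "0 < emeasure M B" and B_fin: "emeasure M B < \<infinity>" and C0: "0 < C0"
    and bound: "\<And>x'. x' \<in> B \<Longrightarrow>
      (\<integral>\<^sup>+x. indicator B x * ennreal (w x) \<partial>M) \<le> ennreal (w x') * (emeasure M B * ennreal C0)"
  shows "set_lebesgue_integral M B w / measure M B \<le> C0 * (INF x\<in>B. w x)"
proof -
  define I where "I = set_lebesgue_integral M B w"
  have \<mu>: "emeasure M B = ennreal (measure M B)" and \<mu>_pos: "0 < measure M B"
    using B_pos B_fin by (auto simp: emeasure_eq_ennreal_measure less_top zero_less_measure_iff)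
  have I_eq: "I = enn2real (\<integral>\<^sup>+x. indicator B x * ennreal (w x) \<partial>M)"
    unfolding I_def set_lebesgue_integral_def using w_nonneg
    by (subst integral_eq_nn_integral) (auto intro!: arg_cong[where f = enn2real] nn_integral_cong
        simp: indicator_def)
  have "I / measure M B / C0 \<le> w x'" if "x' \<in> B" for x'
  proof -
    have "I \<le> w x' * measure M B * C0"
      unfolding I_eq using bound[OF that] \<mu> w_nonneg[of x'] \<mu>_pos C0
      by (intro enn2real_leI) (simp_all add: ennreal_mult[symmetric] mult.assoc)
    then show ?thesis
      using \<mu>_pos C0 by (simp add: divide_le_eq mult.commute mult.left_commute)
  qed
  moreover have "B \<noteq> {}"
    using B_pos by auto
  ultimately have "I / measure M B / C0 \<le> (INF x\<in>B. w x)"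
    by (intro cINF_greatest)
  then have "I / measure M B \<le> (INF x\<in>B. w x) * C0"
    using C0 by (simp only: pos_divide_le_eq)
  then show ?thesis
    by (simp only: I_def mult.commute)
qed

lemma smooth_heis_imp_continuous: "smooth_heis u \<Longrightarrow> continuous_on UNIV u"
  unfolding smooth_heis_def
  by (metis continuous_at_imp_continuous_on differentiable_imp_continuous_within iter_pd.simps(1))

text \<open>In the application f is Q' e^{4u} and c is c'_1.\<close>
locale normal_conformal_factor =
  fixes u f :: "heis \<Rightarrow> real" and c C :: real
  assumes c_pos: "0 < c"
    and continuous_u: "continuous_on UNIV u"
    and f_nonneg: "\<And>y. 0 \<le> f y"
    and f_measurable [measurable]: "f \<in> borel_measurable borel"
    and f_integrable: "integrable hvol f"
    and mass_less: "integral\<^sup>L hvol f < c"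
    and kernel_integrable: "\<And>x. integrable hvol (\<lambda>y. ln (hnorm y / hdist y x) * f y)"
    and u_eq: "\<And>x. u x = 1 / c * (\<integral>y. ln (hnorm y / hdist y x) * f y \<partial>hvol) + C"
begin

definition mass :: real where
  "mass = integral\<^sup>L hvol f"

definition \<beta> :: real where
  "\<beta> = 4 * mass / c"

lemma mass_nonneg: "0 \<le> mass"
  unfolding mass_def using f_nonneg by simp

lemma \<beta>_nonneg: "0 \<le> \<beta>"
  unfolding \<beta>_def using mass_nonneg c_pos by simp

lemma \<beta>_less_4: "\<beta> < 4"
  unfolding \<beta>_def using mass_less c_pos by (simp add: mass_def field_simps)

lemma u_measurable [measurable]: "u \<in> borel_measurable borel"
  using continuous_u by (rule borel_measurable_continuous_onI)

lemma nn_integral_f_div_mass: "(\<integral>\<^sup>+y. ennreal (f y / mass) \<partial>hvol) = (if mass = 0 then 0 else 1)"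
proof (cases "mass = 0")
  case False
  then have "(\<integral>\<^sup>+y. ennreal (f y / mass) \<partial>hvol) = ennreal (\<integral>y. f y / mass \<partial>hvol)"
    using f_integrable f_nonneg mass_nonneg by (intro nn_integral_eq_integral) auto
  then show ?thesis
    using False by (simp add: mass_def)
qed simp

lemma u_eq_const_if_mass_0:
  assumes "mass = 0"
  shows "u x = C"
proof -
  have "AE y in hvol. f y = 0"
    using integral_nonneg_eq_0_iff_AE[OF f_integrable] f_nonneg assms by (simp add: mass_def)
  then have "(\<integral>y. ln (hnorm y / hdist y x) * f y \<partial>hvol) = 0"
    by (intro integral_eq_zero_AE) auto
  then show ?thesis
    by (simp add: u_eq)
qed

text \<open>Jensen's inequality for the probability density f / mass: the representation formula writes
  4 (u x - u x') as the average of \<beta> times the logarithm of the distance ratio.\<close>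
lemma exp_four_u_diff_le:
  assumes mass_pos: "0 < mass"
  shows "ennreal (exp (4 * u x - 4 * u x'))
    \<le> (\<integral>\<^sup>+y. ennreal (f y / mass * (hdist y x' / hdist y x) powr \<beta>) \<partial>hvol)"
proof -
  define w where "w y = f y / mass" for y
  define D where "D y = ln (hnorm y / hdist y x) - ln (hnorm y / hdist y x')" for y
  have w_nonneg: "0 \<le> w y" for y
    using f_nonneg mass_pos by (simp add: w_def)
  have [measurable]: "w \<in> borel_measurable borel" "D \<in> borel_measurable borel"
    unfolding w_def D_def by measurable
  have w_int: "integrable hvol w" and w_total: "integral\<^sup>L hvol w = 1"
    using f_integrable mass_pos unfolding w_def[abs_def] by (simp_all add: mass_def)
  have AE_off: "AE y in hvol. y \<notin> {0, x, x'}"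
    by (rule AE_hvol_not_in) simp
  have wD_eq: "(\<lambda>y. w y * (\<beta> * D y))
      = (\<lambda>y. 4 / c * (ln (hnorm y / hdist y x) * f y - ln (hnorm y / hdist y x') * f y))"
    using mass_pos c_pos by (auto simp: fun_eq_iff w_def D_def \<beta>_def field_simps)
  have "4 * u x - 4 * u x' = 4 / c * ((\<integral>y. ln (hnorm y / hdist y x) * f y \<partial>hvol)
      - (\<integral>y. ln (hnorm y / hdist y x') * f y \<partial>hvol))"
    by (simp add: u_eq[of x] u_eq[of x'] algebra_simps)
  also have "\<dots> = (\<integral>y. w y * (\<beta> * D y) \<partial>hvol)"
    unfolding wD_eq using kernel_integrable[of x] kernel_integrable[of x'] by simp
  finally have "ennreal (exp (4 * u x - 4 * u x')) = ennreal (exp (\<integral>y. w y * (\<beta> * D y) \<partial>hvol))"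
    by simp
  also have "\<dots> \<le> (\<integral>\<^sup>+y. ennreal (w y * exp (\<beta> * D y)) \<partial>hvol)"
    using w_nonneg w_int w_total kernel_integrable
    by (intro exp_integral_le_nn_integral_exp) (simp_all add: wD_eq)
  also have "\<dots> = (\<integral>\<^sup>+y. ennreal (f y / mass * (hdist y x' / hdist y x) powr \<beta>) \<partial>hvol)"
    using AE_off
  proof (intro nn_integral_cong_AE, eventually_elim)
    case (elim y)
    then have "0 < hdist y x" "0 < hdist y x'"
      by (simp_all add: hdist_pos)
    moreover have "D y = ln (hdist y x' / hdist y x)"
      using elim unfolding D_def by (intro ln_kernel_diff) auto
    ultimately show ?case
      by (simp add: w_def powr_def mult.commute)
  qed
  finally show ?thesis .
qed

lemma exp_four_u_le:
  assumes r: "0 < r" and x: "x \<in> hball p r" and x': "x' \<in> hball p r"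
  shows "ennreal (exp (4 * u x)) \<le> ennreal (exp (4 * u x')) * (81 +
    (\<integral>\<^sup>+y. ennreal (f y / mass * indicator (hball p (2 * r)) y * (3 * r / hdist y x) powr \<beta>) \<partial>hvol))"
    (is "_ \<le> _ * (81 + ?G)")
proof (cases "mass = 0")
  case True
  then have "ennreal (exp (4 * u x)) = ennreal (exp (4 * u x')) * 1"
    by (simp add: u_eq_const_if_mass_0)
  also have "\<dots> \<le> ennreal (exp (4 * u x')) * (81 + ?G)"
    by (intro mult_left_mono) (simp_all add: add_increasing2)
  finally show ?thesis .
next
  case False
  then have mass_pos: "0 < mass"
    using mass_nonneg by simp
  have "AE y in hvol. ennreal (f y / mass * (hdist y x' / hdist y x) powr \<beta>)
      \<le> ennreal (81 * (f y / mass))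
        + ennreal (f y / mass * indicator (hball p (2 * r)) y * (3 * r / hdist y x) powr \<beta>)"
  proof (intro AE_I2)
    fix y
    have "f y / mass * (hdist y x' / hdist y x) powr \<beta>
        \<le> f y / mass * (81 + indicator (hball p (2 * r)) y * (3 * r / hdist y x) powr \<beta>)"
      using f_nonneg[of y] mass_pos \<beta>_nonneg \<beta>_less_4
      by (intro mult_left_mono hdist_ratio_powr_le r x x') simp_all
    then show "ennreal (f y / mass * (hdist y x' / hdist y x) powr \<beta>)
        \<le> ennreal (81 * (f y / mass))
          + ennreal (f y / mass * indicator (hball p (2 * r)) y * (3 * r / hdist y x) powr \<beta>)"
      using f_nonneg[of y] mass_pos
      by (simp add: algebra_simps ennreal_plus[symmetric] del: ennreal_plus)
  qed
  then have "(\<integral>\<^sup>+y. ennreal (f y / mass * (hdist y x' / hdist y x) powr \<beta>) \<partial>hvol)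
      \<le> (\<integral>\<^sup>+y. ennreal (81 * (f y / mass)) \<partial>hvol) + ?G"
    by (subst nn_integral_add[symmetric]) (measurable, rule nn_integral_mono_AE)
  also have "(\<integral>\<^sup>+y. ennreal (81 * (f y / mass)) \<partial>hvol) = ennreal (\<integral>y. 81 * (f y / mass) \<partial>hvol)"
    using f_integrable f_nonneg mass_pos by (intro nn_integral_eq_integral) auto
  also have "\<dots> = 81"
    using mass_pos by (simp add: mass_def)
  finally have "ennreal (exp (4 * u x - 4 * u x')) \<le> 81 + ?G"
    using exp_four_u_diff_le[OF mass_pos, of x x'] by simp
  then have "ennreal (exp (4 * u x')) * ennreal (exp (4 * u x - 4 * u x'))
      \<le> ennreal (exp (4 * u x')) * (81 + ?G)"
    by (rule mult_left_mono) simp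
  then show ?thesis
    by (simp add: ennreal_mult[symmetric] exp_diff)
qed

lemma nn_integral_hball_kernel_le:
  assumes r: "0 < r"
  shows "(\<integral>\<^sup>+x. indicator (hball p r) x *
      (\<integral>\<^sup>+y. ennreal (f y / mass * indicator (hball p (2 * r)) y * (3 * r / hdist y x) powr \<beta>) \<partial>hvol) \<partial>hvol)
    \<le> ennreal (324 * singular_const \<beta> * r ^ 4)"
proof -
  define H where "H x y = ennreal (f y / mass * indicator (hball p (2 * r)) y * (3 * r / hdist y x) powr \<beta>)"
    for x y
  have [measurable]: "(\<lambda>(x, y). indicator (hball p r) x * H x y) \<in> borel_measurable (hvol \<Otimes>\<^sub>M hvol)"
    unfolding H_def by measurable
  have inner: "(\<integral>\<^sup>+x. indicator (hball p r) x * H x y \<partial>hvol)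
      \<le> ennreal (f y / mass) * ennreal (324 * singular_const \<beta> * r ^ 4)" for y
  proof (cases "y \<in> hball p (2 * r)")
    case True
    have "indicator (hball p r) x * H x y
        \<le> ennreal (f y / mass) * (indicator (hball y (3 * r)) x * ennreal ((3 * r / hdist y x) powr \<beta>))"
      for x
    proof (cases "x \<in> hball p r")
      case x: True
      have "hdist y x \<le> hdist p y + hdist p x"
        using hdist_triangle[of y x p] hdist_commute[of y p] by linarith
      then have "x \<in> hball y (3 * r)"
        using x True by (simp add: hball_eq)
      then show ?thesis
        using x True f_nonneg[of y] mass_nonneg by (simp add: H_def ennreal_mult'[symmetric])
    qed simp
    then have "(\<integral>\<^sup>+x. indicator (hball p r) x * H x y \<partial>hvol)
        \<le> ennreal (f y / mass) * (\<integral>\<^sup>+x. indicator (hball y (3 * r)) x * ennreal ((3 * r / hdist y x) powr \<beta>) \<partial>hvol)"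
      by (subst nn_integral_cmult[symmetric]) (measurable, rule nn_integral_mono)
    also have "\<dots> \<le> ennreal (f y / mass) * ennreal (4 * singular_const \<beta> * (3 * r) ^ 4)"
      using r \<beta>_nonneg \<beta>_less_4 by (intro mult_left_mono nn_integral_hdist_powr_le) simp_all
    finally show ?thesis
      by (simp add: power_mult_distrib mult.assoc)
  qed (simp add: H_def)
  have "(\<integral>\<^sup>+x. indicator (hball p r) x * (\<integral>\<^sup>+y. H x y \<partial>hvol) \<partial>hvol)
      = (\<integral>\<^sup>+x. \<integral>\<^sup>+y. indicator (hball p r) x * H x y \<partial>hvol \<partial>hvol)"
    by (intro nn_integral_cong nn_integral_cmult[symmetric]) (simp add: H_def)
  also have "\<dots> = (\<integral>\<^sup>+y. \<integral>\<^sup>+x. indicator (hball p r) x * H x y \<partial>hvol \<partial>hvol)"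
    by (rule hvol_pair.Fubini'[symmetric]) measurable
  also have "\<dots> \<le> (\<integral>\<^sup>+y. ennreal (f y / mass) * ennreal (324 * singular_const \<beta> * r ^ 4) \<partial>hvol)"
    by (intro nn_integral_mono inner)
  also have "\<dots> = (\<integral>\<^sup>+y. ennreal (f y / mass) \<partial>hvol) * ennreal (324 * singular_const \<beta> * r ^ 4)"
    by (simp add: nn_integral_multc)
  also have "\<dots> \<le> ennreal (324 * singular_const \<beta> * r ^ 4)"
    by (simp add: nn_integral_f_div_mass)
  finally show ?thesis
    by (simp add: H_def)
qed

lemma nn_integral_hball_exp_le:
  assumes r: "0 < r" and x': "x' \<in> hball p r"
  shows "(\<integral>\<^sup>+x. indicator (hball p r) x * ennreal (exp (4 * u x)) \<partial>hvol)
    \<le> ennreal (exp (4 * u x')) * (emeasure hvol (hball p r) * ennreal (81 + 81 * singular_const \<beta>))"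
proof -
  define B where "B = hball p r"
  define E where "E = ennreal (exp (4 * u x'))"
  define G where "G x = (\<integral>\<^sup>+y. ennreal (f y / mass * indicator (hball p (2 * r)) y
    * (3 * r / hdist y x) powr \<beta>) \<partial>hvol)" for x
  have [measurable]: "G \<in> borel_measurable borel"
    unfolding G_def by (rule hvol.borel_measurable_nn_integral) measurable
  have "(\<integral>\<^sup>+x. indicator B x * ennreal (exp (4 * u x)) \<partial>hvol)
      \<le> (\<integral>\<^sup>+x. E * (81 * indicator B x) + E * (indicator B x * G x) \<partial>hvol)"
  proof (intro nn_integral_mono)
    fix x
    show "indicator B x * ennreal (exp (4 * u x)) \<le> E * (81 * indicator B x) + E * (indicator B x * G x)"
    proof (cases "x \<in> B")
      case True
      then show ?thesis
        using exp_four_u_le[OF r _ x', of x] by (simp add: B_def E_def G_def distrib_left)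
    qed simp
  qed
  also have "\<dots> = E * (81 * emeasure hvol B) + E * (\<integral>\<^sup>+x. indicator B x * G x \<partial>hvol)"
    unfolding B_def by (subst nn_integral_add) (simp_all add: nn_integral_cmult)
  also have "\<dots> \<le> E * (81 * emeasure hvol B) + E * (ennreal (81 * singular_const \<beta>) * emeasure hvol B)"
  proof -
    have "(\<integral>\<^sup>+x. indicator B x * G x \<partial>hvol) \<le> ennreal (324 * singular_const \<beta> * r ^ 4)"
      unfolding B_def G_def using r by (rule nn_integral_hball_kernel_le)
    also have "\<dots> = ennreal (81 * singular_const \<beta>) * ennreal (4 * r ^ 4)"
      using singular_const_pos[OF \<beta>_less_4] by (simp add: ennreal_mult[symmetric])
    also have "\<dots> \<le> ennreal (81 * singular_const \<beta>) * emeasure hvol B"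
      unfolding B_def using r by (intro mult_left_mono emeasure_hball_ge) simp_all
    finally show ?thesis
      by (intro add_left_mono mult_left_mono) simp_all
  qed
  also have "\<dots> = E * (emeasure hvol B * ennreal (81 + 81 * singular_const \<beta>))"
    using singular_const_pos[OF \<beta>_less_4] by (simp add: ennreal_plus algebra_simps)
  finally show ?thesis
    by (simp add: B_def E_def)
qed

lemma A1_weight_exp: "A1_weight (\<lambda>x. exp (4 * u x))"
  unfolding A1_weight_def
proof (intro conjI allI impI exI)
  show "set_integrable hvol K (\<lambda>x. exp (4 * u x))" if "compact K" for K
    using continuous_u that by (intro set_integrable_hvol_compact continuous_intros) auto
  show "set_lebesgue_integral hvol (hball p r) (\<lambda>x. exp (4 * u x)) / measure hvol (hball p r)
      \<le> (81 + 81 * singular_const \<beta>) * (INF q\<in>hball p r. exp (4 * u q))" if r: "0 < r" for p r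
  proof (rule set_average_le_INF)
    have "0 < ennreal (4 * r ^ 4)"
      using r by simp
    then show "0 < emeasure hvol (hball p r)"
      using emeasure_hball_ge[OF r, of p] by (rule order.strict_trans2)
    show "emeasure hvol (hball p r) < \<infinity>"
      using emeasure_hball_le[OF r, of p] by (simp add: le_less_trans)
    show "0 < 81 + 81 * singular_const \<beta>"
      using singular_const_pos[OF \<beta>_less_4] by simp
  qed (simp_all add: nn_integral_hball_exp_le[OF r])
qed simp

end

lemma normal_conformal_factorI:
  assumes c_pos: "0 < c" and continuous_u: "continuous_on UNIV u" and f_nonneg: "\<And>y. 0 \<le> f y"
    and total: "(\<integral>\<^sup>+y. ennreal (f y) \<partial>hvol) < ennreal c"
    and kernel: "\<And>x. integrable hvol (\<lambda>y. ln (hnorm y / hdist y x) * f y)"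
    and u_eq: "\<And>x. u x = 1 / c * (\<integral>y. ln (hnorm y / hdist y x) * f y \<partial>hvol) + C"
  shows "normal_conformal_factor u f c C"
proof -
  have "(\<lambda>y. ln (hnorm y / hdist y (0, 0, s)) * f y) \<in> borel_measurable borel" for s
    using borel_measurable_integrable[OF kernel] by simp
  then have [measurable]: "f \<in> borel_measurable borel"
    by (rule borel_measurable_of_log_kernel)
  have f_int: "integrable hvol f"
    using total f_nonneg by (intro integrableI_nonneg) (auto simp: less_top[symmetric] intro: less_trans)
  have "ennreal (integral\<^sup>L hvol f) < ennreal c"
    using total f_int f_nonneg by (simp add: nn_integral_eq_integral)
  moreover have "0 \<le> integral\<^sup>L hvol f"
    using f_nonneg by simp
  ultimately have "integral\<^sup>L hvol f < c"
    by (simp add: ennreal_less_iff)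
  then show ?thesis
    using c_pos continuous_u f_nonneg f_int kernel u_eq by unfold_locales simp_all
qed

theorem theorem1p2:
  fixes u :: "heis \<Rightarrow> real" and c1' :: real
  assumes c1'_pos: "0 < c1'"
    and smooth: "smooth_heis u"
    and plh: "pluriharmonic u"
    and Qnonneg: "\<forall>x. 0 \<le> Qprime u x"
    and normal: "\<exists>C. \<forall>x.
        integrable hvol (\<lambda>y. ln (hnorm y / hnorm (hmult (hinv y) x)) * (Qprime u y * exp (4 * u y)))
        \<and> u x = (1 / c1') * (\<integral>y. ln (hnorm y / hnorm (hmult (hinv y) x)) * (Qprime u y * exp (4 * u y)) \<partial>hvol) + C"
    and total: "(\<integral>\<^sup>+ y. ennreal (Qprime u y * exp (4 * u y)) \<partial>hvol) < ennreal c1'"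
  shows "A1_weight (\<lambda>x. exp (4 * u x))"
proof -
  define f where "f y = Qprime u y * exp (4 * u y)" for y
  obtain C where kernel: "\<And>x. integrable hvol (\<lambda>y. ln (hnorm y / hdist y x) * f y)"
    and u_eq: "\<And>x. u x = 1 / c1' * (\<integral>y. ln (hnorm y / hdist y x) * f y \<partial>hvol) + C"
    using normal unfolding hdist_def f_def by blast
  have f_nonneg: "0 \<le> f y" for y
    using Qnonneg[rule_format, of y] by (simp add: f_def)
  have total_f: "(\<integral>\<^sup>+y. ennreal (f y) \<partial>hvol) < ennreal c1'"
    using total by (simp add: f_def)
  have "normal_conformal_factor u f c1' C"
    using c1'_pos smooth_heis_imp_continuous[OF smooth] f_nonneg total_f kernel u_eq
    by (rule normal_conformal_factorI)
  then show ?thesis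
    by (rule normal_conformal_factor.A1_weight_exp)
qed

end
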